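(* Let $\mathcal{P}$ be the set of probability distributions on $(\{0,1\},2^{\{0,1\}})$, let $\dot{\mathcal{P}}\subseteq\mathcal{P}$, and let $\ddot{\mathcal{P}}=\{\ddot P_1,\dots,\ddot P_c\}\subseteq\mathcal{P}$. Let $P^+$ denote the combination of the distributions in $\ddot{\mathcal{P}}$ with truth constrained by $\dot{\mathcal{P}}$. Let $\dot{\mathcal{P}}_0=\{\dot P(\{0\}):\dot P\in\dot{\mathcal{P}}\}$ and let $\underline{\ddot P},\overline{\ddot P}\in\mathcal{P}$ satisfy $$\underline{\ddot P}(\{0\})=\min_{i\in\{1,\dots,c\}:\ddot P_i(\{0\})\in\dot{\mathcal{P}}_0}\ddot P_i(\{0\}),\qquad \overline{\ddot P}(\{0\})=\max_{i\in\{1,\dots,c\}:\ddot P_i(\{0\})\in\dot{\mathcal{P}}_0}\ddot P_i(\{0\}).$$ If $\ddot P_i(\{0\})\in\dot{\mathcal{P}}_0$ for some $i\in\{1,\dots,c\}$, then $P^+=w^+\underline{\ddot P}+(1-w^+)\overline{\ddot P}$, where $$w^+=\arg\sup_{w\in[0,1]}\Big(w\,D\big(\underline{\ddot P}\,\|\,w\underline{\ddot P}+(1-w)\overline{\ddot P}\big)+(1-w)\,D\big(\overline{\ddot P}\,\|\,w\underline{\ddot P}+(1-w)\overline{\ddot P}\big)\Big).$$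
   Context: $D(P\|Q)=\sum_{i\in\{0,1\}}P(\{i\})\log\frac{P(\{i\})}{Q(\{i\})}$ (with $0\log0=0$, $0\log(0/0)=0$); $D(P'\|P''\rightsquigarrow Q)=D(P'\|P'')-D(P'\|Q)$. Game: $U(\dot P,P_1,P_2)=\langle -D(\dot P\|P_2),D(\dot P\|P_1\rightsquigarrow P_2)\rangle$, ordered lexicographically ($u\preceq v$ iff $u_1<v_1$, or $u_1=v_1$ and $u_2\le v_2$). For $Q\in\mathcal{P}$, $\mathcal{P}_Q=\arg\sup^{\preceq}_{\langle P',P''\rangle\in\dot{\mathcal{P}}\times\ddot{\mathcal{P}}}U(P',Q,P'')$, and the combination of the distributions in $\ddot{\mathcal{P}}$ with truth constrained by $\dot{\mathcal{P}}$ is $P^+=\arg\sup^{\preceq}_{Q\in\mathcal{P}:\langle\dot P_Q,\ddot P_Q\rangle\in\mathcal{P}_Q}U(\dot P_Q,\ddot P_Q,Q)$. *)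

theory Defs
  imports "HOL-Library.Extended_Real"
begin

text \<open>A probability distribution on ({0,1}, 2^{0,1}) is represented by its point-mass
  function P :: nat => real (P i = P({i})), nonnegative on {0,1}, summing to 1,
  and zero outside {0,1} (so that equality of distributions is equality of functions).\<close>

definition Dists :: "(nat \<Rightarrow> real) set" where
  "Dists = {P. P 0 \<ge> 0 \<and> P 1 \<ge> 0 \<and> P 0 + P 1 = 1 \<and> (\<forall>i. i \<notin> {0,1} \<longrightarrow> P i = 0)}"

definition kl_term :: "real \<Rightarrow> real \<Rightarrow> ereal" where
  "kl_term p q = (if p = 0 then 0 else if q = 0 then \<infinity> else ereal (p * ln (p / q)))"

definition KL :: "(nat \<Rightarrow> real) \<Rightarrow> (nat \<Rightarrow> real) \<Rightarrow> ereal" where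
  "KL P Q = (\<Sum>i\<in>{0::nat,1}. kl_term (P i) (Q i))"

definition KL_shift :: "(nat \<Rightarrow> real) \<Rightarrow> (nat \<Rightarrow> real) \<Rightarrow> (nat \<Rightarrow> real) \<Rightarrow> ereal" where
  "KL_shift P' P'' Q = KL P' P'' - KL P' Q"

definition U :: "(nat \<Rightarrow> real) \<Rightarrow> (nat \<Rightarrow> real) \<Rightarrow> (nat \<Rightarrow> real) \<Rightarrow> ereal \<times> ereal" where
  "U Pd P1 P2 = (- KL Pd P2, KL_shift Pd P1 P2)"

definition lex_le :: "ereal \<times> ereal \<Rightarrow> ereal \<times> ereal \<Rightarrow> bool" where
  "lex_le u v \<longleftrightarrow> fst u < fst v \<or> (fst u = fst v \<and> snd u \<le> snd v)"

definition PQ :: "(nat \<Rightarrow> real) set \<Rightarrow> (nat \<Rightarrow> real) set \<Rightarrow> (nat \<Rightarrow> real)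
    \<Rightarrow> ((nat \<Rightarrow> real) \<times> (nat \<Rightarrow> real)) set" where
  "PQ Pdot Pddot Q = {(P', P''). P' \<in> Pdot \<and> P'' \<in> Pddot \<and>
      (\<forall>a\<in>Pdot. \<forall>b\<in>Pddot. lex_le (U a Q b) (U P' Q P''))}"

definition combination :: "(nat \<Rightarrow> real) set \<Rightarrow> (nat \<Rightarrow> real) set \<Rightarrow> (nat \<Rightarrow> real) set" where
  "combination Pdot Pddot = {Q \<in> Dists. \<exists>(a, b) \<in> PQ Pdot Pddot Q.
      \<forall>Q'\<in>Dists. \<forall>(a', b') \<in> PQ Pdot Pddot Q'. lex_le (U a' b' Q') (U a b Q)}"

definition mix :: "real \<Rightarrow> (nat \<Rightarrow> real) \<Rightarrow> (nat \<Rightarrow> real) \<Rightarrow> (nat \<Rightarrow> real)" where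
  "mix w P Q = (\<lambda>i. w * P i + (1 - w) * Q i)"

definition mix_objective :: "(nat \<Rightarrow> real) \<Rightarrow> (nat \<Rightarrow> real) \<Rightarrow> real \<Rightarrow> ereal" where
  "mix_objective Plo Phi w =
     ereal w * KL Plo (mix w Plo Phi) + ereal (1 - w) * KL Phi (mix w Plo Phi)"

definition argsup_w :: "(nat \<Rightarrow> real) \<Rightarrow> (nat \<Rightarrow> real) \<Rightarrow> real set" where
  "argsup_w Plo Phi = {w \<in> {0..1}. \<forall>v\<in>{0..1}. mix_objective Plo Phi v \<le> mix_objective Plo Phi w}"

end

theory Submission
  imports Defs
begin

text \<open>As soon as some candidate in Pddot is compatible with Pdot, the first component of the
  lexicographic utility forces both players onto a common distribution, and P^+ becomes the
  minimax centre, for KL(P || Q), of the common distributions. Binary distributions are ordered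
  by their mass at 0, and the compensation identity
    w D(x||q) + (1-w) D(y||q) = w D(x||r) + (1-w) D(y||r) + D(r||q),   r = w x + (1-w) y,
  shows that the two extreme common distributions dominate all others, that the centre is the
  unique point r between them from which both are equally far, and that the weight producing r
  maximises the mixture objective.\<close>

definition bin_kl :: "real \<Rightarrow> real \<Rightarrow> real" where
  "bin_kl p q = p * ln p - p * ln q + (1 - p) * ln (1 - p) - (1 - p) * ln (1 - q)"

lemma bin_kl_self [simp]: "bin_kl p p = 0"
  unfolding bin_kl_def by simp

lemma mult_ln_diff_ge:
  fixes p q :: real
  assumes "0 \<le> p" "0 < q"
  shows "p - q \<le> p * ln p - p * ln q"
    and "p \<noteq> q \<Longrightarrow> p - q < p * ln p - p * ln q"
proof -
  have "p - q \<le> p * ln p - p * ln q \<and> (p \<noteq> q \<longrightarrow> p - q < p * ln p - p * ln q)"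
  proof (cases "p = 0")
    case True
    then show ?thesis using assms by simp
  next
    case False
    then have p: "0 < p" using assms by simp
    have eq: "p * ln p - p * ln q = - p * ln (q / p)"
      using p assms by (simp add: ln_divide_pos algebra_simps)
    have lin: "- p * (q / p - 1) = p - q" using p by (simp add: field_simps)
    have "ln (q / p) \<le> q / p - 1" using ln_le_minus_one p assms by simp
    moreover have "ln (q / p) < q / p - 1" if "p \<noteq> q"
      using \<open>ln (q / p) \<le> q / p - 1\<close> ln_eq_minus_one[of "q / p"] that p assms by force
    ultimately show ?thesis using p unfolding eq lin[symmetric] by (auto simp: mult_left_mono)
  qed
  then show "p - q \<le> p * ln p - p * ln q" "p \<noteq> q \<Longrightarrow> p - q < p * ln p - p * ln q"
    by auto
qed

lemma bin_kl_nonneg: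
  assumes "0 \<le> p" "p \<le> 1" "0 < q" "q < 1"
  shows "0 \<le> bin_kl p q"
  using mult_ln_diff_ge(1)[of p q] mult_ln_diff_ge(1)[of "1 - p" "1 - q"] assms
  unfolding bin_kl_def by simp

lemma bin_kl_pos:
  assumes "0 \<le> p" "p \<le> 1" "0 < q" "q < 1" "p \<noteq> q"
  shows "0 < bin_kl p q"
  using mult_ln_diff_ge(2)[of p q] mult_ln_diff_ge(1)[of "1 - p" "1 - q"] assms
  unfolding bin_kl_def by simp

lemma bin_kl_mixture_identity:
  assumes "r = v * x + (1 - v) * y"
  shows "v * bin_kl x q + (1 - v) * bin_kl y q
       = v * bin_kl x r + (1 - v) * bin_kl y r + bin_kl r q"
proof -
  have r1: "1 - r = v * (1 - x) + (1 - v) * (1 - y)" using assms by (simp add: algebra_simps)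
  have r_times: "r * L = v * x * L + (1 - v) * y * L" for L
    using assms by (simp add: distrib_right)
  have r1_times: "(1 - r) * L = v * (1 - x) * L + (1 - v) * (1 - y) * L" for L
    using r1 by (metis distrib_right)
  note r_times[of "ln r"] r_times[of "ln q"] r1_times[of "ln (1 - r)"] r1_times[of "ln (1 - q)"]
  then show ?thesis unfolding bin_kl_def by (simp add: algebra_simps)
qed

text \<open>The equalizer q has logit (h y - h x) / (y - x), the slope of the negative binary
  entropy h between x and y; strict convexity of h puts it strictly between x and y.\<close>
lemma bin_kl_equalizer_exists:
  fixes x y :: real
  assumes "0 \<le> x" "x < y" "y \<le> 1"
  obtains q where "x < q" "q < y" "bin_kl x q = bin_kl y q"
proof -
  define h where "h p = p * ln p + (1 - p) * ln (1 - p)" for p :: real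
  define K where "K = (h y - h x) / (y - x)"
  define q where "q = exp K / (1 + exp K)"
  have pos: "0 < exp K" "0 < 1 + exp K" by (simp_all add: add_pos_pos)
  have q01: "0 < q" "q < 1"
    unfolding q_def using pos by (simp_all add: divide_pos_pos divide_less_eq)
  have logit_q: "ln q - ln (1 - q) = K"
  proof -
    have "1 - q = 1 / (1 + exp K)" using pos unfolding q_def by (simp add: field_simps)
    then show ?thesis using pos unfolding q_def by (simp add: ln_divide_pos ln_div)
  qed
  have bin_kl_h: "bin_kl p r = h p - p * ln r - (1 - p) * ln (1 - r)" for p r
    unfolding bin_kl_def h_def by simp
  have K: "K * (y - x) = h y - h x" unfolding K_def using assms by simp
  have "bin_kl x q - bin_kl y q = h x - h y + (y - x) * (ln q - ln (1 - q))"
    unfolding bin_kl_h by (simp add: algebra_simps)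
  then have equal: "bin_kl x q = bin_kl y q" using logit_q K by (simp add: algebra_simps)
  have "x < q"
  proof (cases "x = 0")
    case False
    then have x: "0 < x" "x < 1" using assms by auto
    have "0 < bin_kl y x" using bin_kl_pos[of y x] x assms by simp
    moreover have "bin_kl y x = h y - h x - (ln x - ln (1 - x)) * (y - x)"
      unfolding bin_kl_h by (simp add: algebra_simps h_def)
    ultimately have "(ln x - ln (1 - x)) * (y - x) < K * (y - x)" using K by simp
    then have "ln x - ln (1 - x) < K" using assms by simp
    then have "x / (1 - x) < exp K" using x by (metis exp_diff exp_less_cancel_iff exp_ln diff_gt_0_iff_gt)
    then show ?thesis using x pos unfolding q_def by (simp add: divide_less_eq less_divide_eq algebra_simps)
  qed (use q01 in simp)
  moreover have "q < y"
  proof (cases "y = 1")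
    case False
    then have y: "0 < y" "y < 1" using assms by auto
    have "0 < bin_kl x y" using bin_kl_pos[of x y] y assms by simp
    moreover have "bin_kl x y = (ln y - ln (1 - y)) * (y - x) - (h y - h x)"
      unfolding bin_kl_h by (simp add: algebra_simps h_def)
    ultimately have "K * (y - x) < (ln y - ln (1 - y)) * (y - x)" using K by simp
    then have "K < ln y - ln (1 - y)" using assms by simp
    then have "exp K < y / (1 - y)" using y by (metis exp_diff exp_less_cancel_iff exp_ln diff_gt_0_iff_gt)
    then show ?thesis using y pos unfolding q_def by (simp add: divide_less_eq less_divide_eq algebra_simps)
  qed (use q01 in simp)
  ultimately show ?thesis using equal that by blast
qed

lemma bin_kl_le_at_equalizer:
  assumes "0 \<le> x" "x \<le> p" "p \<le> y" "y \<le> 1" "0 < q" "q < 1"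
    and equal: "bin_kl x q = bin_kl y q"
  shows "bin_kl p q \<le> bin_kl x q"
proof (cases "x = y")
  case True
  then show ?thesis using assms by simp
next
  case False
  define l where "l = (y - p) / (y - x)"
  have l: "0 \<le> l" "l \<le> 1" unfolding l_def using assms False by (auto simp: field_simps)
  have "l * (y - x) = y - p" unfolding l_def using False by simp
  then have "p = l * x + (1 - l) * y" by (simp add: algebra_simps)
  then have split: "bin_kl x q = l * bin_kl x p + (1 - l) * bin_kl y p + bin_kl p q"
    using bin_kl_mixture_identity[of p l x y q] equal by (simp add: algebra_simps)
  have "0 \<le> l * bin_kl x p + (1 - l) * bin_kl y p"
  proof (cases "p = x \<or> p = y")
    case True
    moreover have "l = 1" if "p = x" using False that unfolding l_def by simp
    moreover have "l = 0" if "p = y" using that unfolding l_def by simp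
    ultimately show ?thesis by auto
  next
    case False
    then have "0 < p" "p < 1" using assms by auto
    then show ?thesis using bin_kl_nonneg assms l by simp
  qed
  then show ?thesis using split by simp
qed

lemma bin_kl_gt_off_equalizer:
  assumes r: "r = w * x + (1 - w) * y" "0 \<le> w" "w \<le> 1"
    and "0 < r" "r < 1" "0 < q" "q < 1" "q \<noteq> r"
    and equal: "bin_kl x r = bin_kl y r"
  shows "bin_kl x r < bin_kl x q \<or> bin_kl x r < bin_kl y q"
proof (rule ccontr)
  assume "\<not> ?thesis"
  then have "w * bin_kl x q + (1 - w) * bin_kl y q \<le> w * bin_kl x r + (1 - w) * bin_kl x r"
    using r by (intro add_mono mult_left_mono) auto
  moreover have "0 < bin_kl r q" using bin_kl_pos assms by simp
  ultimately show False
    using bin_kl_mixture_identity[OF r(1), of q] equal by (simp add: algebra_simps)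
qed

lemma Dists_D: "P \<in> Dists \<Longrightarrow> 0 \<le> P 0 \<and> P 0 \<le> 1 \<and> P 1 = 1 - P 0"
  unfolding Dists_def by auto

lemma Dists_eqI:
  assumes "P \<in> Dists" "Q \<in> Dists" "P 0 = Q 0"
  shows "P = Q"
proof
  fix i
  show "P i = Q i"
    using assms Dists_D[of P] Dists_D[of Q] unfolding Dists_def by (cases "i \<in> {0, 1}") auto
qed

lemma mix_in_Dists:
  assumes "P \<in> Dists" "Q \<in> Dists" "0 \<le> w" "w \<le> 1"
  shows "mix w P Q \<in> Dists"
proof -
  have "w * P 0 + (1 - w) * Q 0 + (w * P 1 + (1 - w) * Q 1)
      = w * (P 0 + P 1) + (1 - w) * (Q 0 + Q 1)"
    by (simp add: algebra_simps)
  then show ?thesis using assms unfolding Dists_def mix_def by auto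
qed

lemma mix_apply_0: "mix w P Q 0 = w * P 0 + (1 - w) * Q 0"
  unfolding mix_def by simp

lemma mix_swap: "mix v P Q = mix (1 - v) Q P"
  unfolding mix_def by (simp add: algebra_simps)

lemma KL_self [simp]: "KL P P = 0"
  unfolding KL_def kl_term_def by simp

lemma KL_on_Dists: "P \<in> Dists \<Longrightarrow> Q \<in> Dists \<Longrightarrow>
    KL P Q = kl_term (P 0) (Q 0) + kl_term (1 - P 0) (1 - Q 0)"
  unfolding KL_def using Dists_D[of P] Dists_D[of Q] by simp

lemma kl_term_eq_ereal:
  assumes "0 \<le> p" "0 < p \<Longrightarrow> 0 < q"
  shows "kl_term p q = ereal (p * ln p - p * ln q)"
proof (cases "p = 0")
  case False
  then show ?thesis using assms unfolding kl_term_def by (simp add: ln_divide_pos right_diff_distrib)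
qed (simp add: kl_term_def)

lemma KL_eq_bin_kl:
  assumes "P \<in> Dists" "Q \<in> Dists" "0 < P 0 \<Longrightarrow> 0 < Q 0" "P 0 < 1 \<Longrightarrow> Q 0 < 1"
  shows "KL P Q = ereal (bin_kl (P 0) (Q 0))"
  using assms Dists_D[of P] unfolding KL_on_Dists[OF assms(1,2)] bin_kl_def
  by (simp add: kl_term_eq_ereal)

lemma KL_eq_infinity:
  assumes "P \<in> Dists" "Q \<in> Dists" "(0 < P 0 \<and> Q 0 = 0) \<or> (P 0 < 1 \<and> Q 0 = 1)"
  shows "KL P Q = \<infinity>"
proof -
  have "kl_term p q \<noteq> - \<infinity>" for p q unfolding kl_term_def by auto
  then show ?thesis using assms unfolding KL_on_Dists[OF assms(1,2)] kl_term_def by auto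
qed

lemma KL_pos:
  assumes "P \<in> Dists" "Q \<in> Dists" "P \<noteq> Q"
  shows "0 < KL P Q"
proof -
  have "P 0 \<noteq> Q 0" using Dists_eqI assms by blast
  show ?thesis
  proof (cases "0 < Q 0 \<and> Q 0 < 1")
    case True
    then show ?thesis using KL_eq_bin_kl bin_kl_pos Dists_D \<open>P 0 \<noteq> Q 0\<close> assms by simp
  next
    case False
    then have "(0 < P 0 \<and> Q 0 = 0) \<or> (P 0 < 1 \<and> Q 0 = 1)"
      using Dists_D[OF assms(1)] Dists_D[OF assms(2)] \<open>P 0 \<noteq> Q 0\<close> by fastforce
    then show ?thesis using KL_eq_infinity assms by simp
  qed
qed

text \<open>At v = 0 the divergence may be infinite; the statement relies on ereal 0 * \<infinity> = 0.\<close>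
lemma times_KL_mix:
  assumes "P \<in> Dists" "Q \<in> Dists" "0 \<le> v" "v \<le> 1"
  shows "ereal v * KL P (mix v P Q) = ereal (v * bin_kl (P 0) (v * P 0 + (1 - v) * Q 0))"
proof (cases "v = 0")
  case True
  then show ?thesis by (simp add: zero_ereal_def[symmetric])
next
  case False
  then have v: "0 < v" using assms by simp
  have "0 \<le> Q 0" "Q 0 \<le> 1" using assms Dists_D by auto
  then have Q: "0 \<le> (1 - v) * Q 0" "(1 - v) * Q 0 \<le> 1 - v"
    using assms by (simp_all add: mult_left_le)
  have "0 < mix v P Q 0" if "0 < P 0"
    using Q v that unfolding mix_apply_0 by (simp add: add_pos_nonneg)
  moreover have "mix v P Q 0 < 1" if "P 0 < 1"
  proof -
    have "v * P 0 < v" using v that by simp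
    then show ?thesis using Q unfolding mix_apply_0 by simp
  qed
  ultimately show ?thesis using KL_eq_bin_kl[OF assms(1) mix_in_Dists[OF assms]] mix_apply_0
    by simp
qed

lemma mix_objective_eq_bin_kl:
  assumes "Plo \<in> Dists" "Phi \<in> Dists" "0 \<le> v" "v \<le> 1"
  defines "r \<equiv> v * Plo 0 + (1 - v) * Phi 0"
  shows "mix_objective Plo Phi v = ereal (v * bin_kl (Plo 0) r + (1 - v) * bin_kl (Phi 0) r)"
  using times_KL_mix[OF assms(1-4)] times_KL_mix[of Phi Plo "1 - v"] assms
  unfolding mix_objective_def r_def by (simp add: mix_swap[of v Plo] algebra_simps)

lemma U_diag: "U P P Q = (- KL P Q, - KL P Q)"
  unfolding U_def KL_shift_def by (cases "KL P Q") simp_all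

lemma PQ_iff:
  assumes "Pdot \<subseteq> Dists" "Pddot \<subseteq> Dists" "Pdot \<inter> Pddot \<noteq> {}"
  shows "(a, b) \<in> PQ Pdot Pddot Q \<longleftrightarrow>
    a = b \<and> a \<in> Pdot \<inter> Pddot \<and> (\<forall>b'\<in>Pdot \<inter> Pddot. KL b' Q \<le> KL a Q)"
proof
  assume "(a, b) \<in> PQ Pdot Pddot Q"
  then have ab: "a \<in> Pdot" "b \<in> Pddot"
    and max: "\<forall>a'\<in>Pdot. \<forall>b'\<in>Pddot. lex_le (U a' Q b') (U a Q b)"
    unfolding PQ_def by auto
  obtain b0 where "b0 \<in> Pdot \<inter> Pddot" using assms by auto
  then have "lex_le (U b0 Q b0) (U a Q b)" using max by auto
  then have "\<not> 0 < KL a b" unfolding lex_le_def U_def KL_shift_def by auto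
  then have "a = b" using KL_pos ab assms by blast
  moreover have "KL b' Q \<le> KL a Q" if "b' \<in> Pdot \<inter> Pddot" for b'
  proof -
    have "lex_le (U b' Q b') (U a Q b)" using max that by auto
    then show ?thesis using \<open>a = b\<close> unfolding lex_le_def U_def KL_shift_def by auto
  qed
  ultimately show "a = b \<and> a \<in> Pdot \<inter> Pddot \<and> (\<forall>b'\<in>Pdot \<inter> Pddot. KL b' Q \<le> KL a Q)"
    using ab by auto
next
  assume h: "a = b \<and> a \<in> Pdot \<inter> Pddot \<and> (\<forall>b'\<in>Pdot \<inter> Pddot. KL b' Q \<le> KL a Q)"
  have "lex_le (U a' Q b') (U a Q b)" if "a' \<in> Pdot" "b' \<in> Pddot" for a' b'
  proof (cases "a' = b'")
    case True
    then show ?thesis using h that unfolding lex_le_def U_def KL_shift_def by auto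
  next
    case False
    then have "- KL a' b' < 0" using KL_pos that assms by (simp add: ereal_uminus_less_reorder subset_eq)
    then show ?thesis using h unfolding lex_le_def U_def KL_shift_def by auto
  qed
  then show "(a, b) \<in> PQ Pdot Pddot Q" using h unfolding PQ_def by auto
qed

lemma combination_eq_singleton:
  assumes "Pdot \<subseteq> Dists" "Pddot \<subseteq> Dists" "Q \<in> Dists" "P \<in> Pdot \<inter> Pddot"
    and max: "\<forall>P'\<in>Pdot \<inter> Pddot. KL P' Q \<le> KL P Q"
    and unique: "\<forall>Q'\<in>Dists. Q' \<noteq> Q \<longrightarrow> (\<exists>P'\<in>Pdot \<inter> Pddot. KL P Q < KL P' Q')"
  shows "combination Pdot Pddot = {Q}"
proof -
  let ?S = "Pdot \<inter> Pddot"
  have "?S \<noteq> {}" using assms(4) by blast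
  note PQ = PQ_iff[OF assms(1,2) this]
  have lex_diag: "lex_le (U a' a' Q') (U a a Q'') \<longleftrightarrow> KL a Q'' \<le> KL a' Q'" for a a' Q' Q''
    unfolding U_diag lex_le_def by auto
  have PQ_P: "(P, P) \<in> PQ Pdot Pddot Q" using PQ[of P P Q] assms(4) max by simp
  have radius_ge: "KL P Q \<le> KL a Q'"
    if Q': "Q' \<in> Dists" "(a, a) \<in> PQ Pdot Pddot Q'" for Q' a
  proof -
    have a_max: "\<forall>P'\<in>?S. KL P' Q' \<le> KL a Q'" using PQ[of a a Q'] Q'(2) by simp
    show ?thesis
    proof (cases "Q' = Q")
      case True
      then show ?thesis using a_max assms(4) by simp
    next
      case False
      then obtain P' where "P' \<in> ?S" "KL P Q < KL P' Q'" using unique Q'(1) by blast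
      then show ?thesis using a_max by (meson less_imp_le order_trans)
    qed
  qed
  have "lex_le (U a' b' Q') (U P P Q)" if "Q' \<in> Dists" "(a', b') \<in> PQ Pdot Pddot Q'" for Q' a' b'
  proof -
    have "a' = b'" using PQ[of a' b' Q'] that(2) by simp
    then show ?thesis using lex_diag radius_ge that by simp
  qed
  then have "Q \<in> combination Pdot Pddot"
    unfolding combination_def using assms(3) PQ_P by blast
  moreover have "Q' = Q" if "Q' \<in> combination Pdot Pddot" for Q'
  proof (rule ccontr)
    assume "Q' \<noteq> Q"
    from that obtain a b where Q'_center: "Q' \<in> Dists" "(a, b) \<in> PQ Pdot Pddot Q'"
      and best: "\<forall>Q''\<in>Dists. \<forall>(a', b')\<in>PQ Pdot Pddot Q''. lex_le (U a' b' Q'') (U a b Q')"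
      unfolding combination_def by blast
    have "a = b" and a_max: "\<forall>P'\<in>?S. KL P' Q' \<le> KL a Q'"
      using PQ[of a b Q'] Q'_center(2) by blast+
    have "lex_le (U P P Q) (U a a Q')" using best assms(3) PQ_P \<open>a = b\<close> by blast
    then have "KL a Q' \<le> KL P Q" using lex_diag by blast
    moreover obtain P' where "P' \<in> ?S" "KL P Q < KL P' Q'"
      using unique Q'_center(1) \<open>Q' \<noteq> Q\<close> by blast
    ultimately show False using a_max by (meson leD order_trans)
  qed
  ultimately show ?thesis by blast
qed

lemma KL_le_at_equalizer:
  assumes "Plo \<in> Dists" "Phi \<in> Dists" "P \<in> Dists" "Plo 0 \<le> P 0" "P 0 \<le> Phi 0"
    and "Q \<in> Dists" "0 < Q 0" "Q 0 < 1" "KL Plo Q = KL Phi Q"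
  shows "KL P Q \<le> KL Plo Q"
proof -
  have KL_Q: "R \<in> Dists \<Longrightarrow> KL R Q = ereal (bin_kl (R 0) (Q 0))" for R
    using KL_eq_bin_kl assms(6-8) by blast
  then show ?thesis
    using assms bin_kl_le_at_equalizer[of "Plo 0" "P 0" "Phi 0" "Q 0"] Dists_D[of Plo] Dists_D[of Phi]
    by simp
qed

lemma KL_gt_off_equalizer:
  assumes "Plo \<in> Dists" "Phi \<in> Dists" "Plo 0 \<le> Phi 0" "0 \<le> w" "w \<le> 1"
    and M: "M = mix w Plo Phi" "0 < M 0" "M 0 < 1" "KL Plo M = KL Phi M"
    and Q: "Q \<in> Dists" "Q \<noteq> M"
  shows "KL Plo M < KL Plo Q \<or> KL Plo M < KL Phi Q"
proof -
  have "M \<in> Dists" using M(1) mix_in_Dists assms by blast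
  then have KL_M: "R \<in> Dists \<Longrightarrow> KL R M = ereal (bin_kl (R 0) (M 0))" for R
    using KL_eq_bin_kl M(2,3) by blast
  have M0: "M 0 = w * Plo 0 + (1 - w) * Phi 0" using M(1) mix_apply_0 by simp
  have "w * Plo 0 + (1 - w) * Plo 0 \<le> M 0" "M 0 \<le> w * Phi 0 + (1 - w) * Phi 0"
    unfolding M0 using assms by (simp_all add: mult_left_mono)
  then have "0 < Phi 0" "Plo 0 < 1" using M(2,3) by (simp_all add: algebra_simps)
  moreover have "Q 0 \<noteq> M 0" using Dists_eqI Q \<open>M \<in> Dists\<close> by blast
  ultimately consider "Q 0 = 0" "0 < Phi 0" | "Q 0 = 1" "Plo 0 < 1" | "0 < Q 0" "Q 0 < 1"
    using Dists_D[OF Q(1)] by fastforce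
  then show ?thesis
  proof cases
    case 1
    then show ?thesis using KL_eq_infinity assms KL_M by simp
  next
    case 2
    then show ?thesis using KL_eq_infinity assms KL_M by simp
  next
    case 3
    then show ?thesis
      using bin_kl_gt_off_equalizer[OF M0 assms(4,5) M(2,3) 3 \<open>Q 0 \<noteq> M 0\<close>]
        KL_eq_bin_kl[OF _ Q(1)] KL_M M(4) assms(1,2) by simp
  qed
qed

text \<open>By the compensation identity the objective at v is the common divergence C of the
  endpoints from the equalizer M minus the divergence of mix v from M.\<close>
lemma argsup_w_at_equalizer:
  assumes "Plo \<in> Dists" "Phi \<in> Dists" "0 \<le> w" "w \<le> 1"
    and M: "M = mix w Plo Phi" "0 < M 0" "M 0 < 1" "KL Plo M = KL Phi M"
  shows "w \<in> argsup_w Plo Phi" and "\<forall>v\<in>argsup_w Plo Phi. mix v Plo Phi = M"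
proof -
  define C where "C = bin_kl (Plo 0) (M 0)"
  have "M \<in> Dists" using M(1) mix_in_Dists assms by blast
  then have "KL R M = ereal (bin_kl (R 0) (M 0))" if "R \<in> Dists" for R
    using KL_eq_bin_kl M(2,3) that by blast
  then have C: "bin_kl (Phi 0) (M 0) = C" using M(4) assms(1,2) unfolding C_def by simp
  have objective: "mix_objective Plo Phi v = ereal (C - bin_kl (mix v Plo Phi 0) (M 0))"
    and gap: "0 \<le> bin_kl (mix v Plo Phi 0) (M 0)"
    if "0 \<le> v" "v \<le> 1" for v
  proof -
    have "mix v Plo Phi \<in> Dists" using mix_in_Dists assms(1,2) that by blast
    then show "0 \<le> bin_kl (mix v Plo Phi 0) (M 0)" using bin_kl_nonneg Dists_D M(2,3) by simp
    show "mix_objective Plo Phi v = ereal (C - bin_kl (mix v Plo Phi 0) (M 0))"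
      using mix_objective_eq_bin_kl[OF assms(1,2) that]
        bin_kl_mixture_identity[of "mix v Plo Phi 0" v "Plo 0" "Phi 0" "M 0"] C
      unfolding C_def mix_apply_0 by (simp add: algebra_simps)
  qed
  then have "mix_objective Plo Phi w = ereal C" using assms M(1) by simp
  then show w: "w \<in> argsup_w Plo Phi" unfolding argsup_w_def using objective gap assms(3,4) by simp
  show "\<forall>v\<in>argsup_w Plo Phi. mix v Plo Phi = M"
  proof
    fix v assume "v \<in> argsup_w Plo Phi"
    then have v: "0 \<le> v" "v \<le> 1" and "mix_objective Plo Phi w \<le> mix_objective Plo Phi v"
      using w unfolding argsup_w_def by auto
    then have "bin_kl (mix v Plo Phi 0) (M 0) = 0"
      using objective gap \<open>mix_objective Plo Phi w = ereal C\<close> by (simp add: antisym)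
    moreover have "mix v Plo Phi \<in> Dists" using mix_in_Dists assms(1,2) v by blast
    ultimately show "mix v Plo Phi = M"
      using bin_kl_pos Dists_D Dists_eqI \<open>M \<in> Dists\<close> M(2,3) by (metis less_irrefl)
  qed
qed

lemma binary_center_exists:
  assumes "Plo \<in> Dists" "Phi \<in> Dists" "Plo 0 \<le> Phi 0"
  obtains w where "w \<in> argsup_w Plo Phi" "\<forall>v\<in>argsup_w Plo Phi. mix v Plo Phi = mix w Plo Phi"
    and "\<forall>P\<in>Dists. Plo 0 \<le> P 0 \<and> P 0 \<le> Phi 0 \<longrightarrow> KL P (mix w Plo Phi) \<le> KL Plo (mix w Plo Phi)"
    and "\<forall>Q\<in>Dists. Q \<noteq> mix w Plo Phi \<longrightarrow>
           KL Plo (mix w Plo Phi) < KL Plo Q \<or> KL Plo (mix w Plo Phi) < KL Phi Q"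
proof (cases "Plo 0 = Phi 0")
  case True
  then have "Phi = Plo" using Dists_eqI assms by metis
  have mix_Plo: "mix v Plo Plo = Plo" for v unfolding mix_def by (simp add: algebra_simps)
  show ?thesis
  proof (rule that[of 0])
    show "0 \<in> argsup_w Plo Phi" "\<forall>v\<in>argsup_w Plo Phi. mix v Plo Phi = mix 0 Plo Phi"
      unfolding argsup_w_def mix_objective_def \<open>Phi = Plo\<close> mix_Plo by auto
    show "\<forall>P\<in>Dists. Plo 0 \<le> P 0 \<and> P 0 \<le> Phi 0 \<longrightarrow> KL P (mix 0 Plo Phi) \<le> KL Plo (mix 0 Plo Phi)"
      using Dists_eqI assms(1) True unfolding \<open>Phi = Plo\<close> mix_Plo by force
    show "\<forall>Q\<in>Dists. Q \<noteq> mix 0 Plo Phi \<longrightarrow>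
           KL Plo (mix 0 Plo Phi) < KL Plo Q \<or> KL Plo (mix 0 Plo Phi) < KL Phi Q"
      using KL_pos[OF assms(1)] unfolding \<open>Phi = Plo\<close> mix_Plo by auto
  qed
next
  case False
  then have "Plo 0 < Phi 0" using assms(3) by simp
  then obtain q where q: "Plo 0 < q" "q < Phi 0" "bin_kl (Plo 0) q = bin_kl (Phi 0) q"
    using bin_kl_equalizer_exists[of "Plo 0" "Phi 0"] Dists_D assms(1,2) by blast
  define w where "w = (Phi 0 - q) / (Phi 0 - Plo 0)"
  have w: "0 \<le> w" "w \<le> 1" using q unfolding w_def by (simp_all add: field_simps)
  have "w * (Phi 0 - Plo 0) = Phi 0 - q" using q unfolding w_def by simp
  then have M0: "mix w Plo Phi 0 = q" unfolding mix_apply_0 by (simp add: algebra_simps)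
  then have M: "0 < mix w Plo Phi 0" "mix w Plo Phi 0 < 1" using q Dists_D assms by force+
  have M_Dists: "mix w Plo Phi \<in> Dists" using mix_in_Dists assms w by blast
  have equal: "KL Plo (mix w Plo Phi) = KL Phi (mix w Plo Phi)"
    using KL_eq_bin_kl[OF _ M_Dists] M M0 q(3) assms by simp
  show ?thesis
  proof (rule that)
    show "w \<in> argsup_w Plo Phi" "\<forall>v\<in>argsup_w Plo Phi. mix v Plo Phi = mix w Plo Phi"
      using argsup_w_at_equalizer[OF assms(1,2) w refl M equal] by blast+
    show "\<forall>P\<in>Dists. Plo 0 \<le> P 0 \<and> P 0 \<le> Phi 0 \<longrightarrow> KL P (mix w Plo Phi) \<le> KL Plo (mix w Plo Phi)"
      using KL_le_at_equalizer[OF assms(1,2) _ _ _ M_Dists M equal] by blast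
    show "\<forall>Q\<in>Dists. Q \<noteq> mix w Plo Phi \<longrightarrow>
           KL Plo (mix w Plo Phi) < KL Plo Q \<or> KL Plo (mix w Plo Phi) < KL Phi Q"
      using KL_gt_off_equalizer[OF assms w refl M equal] by blast
  qed
qed

lemma point_masses_eq_image:
  assumes "Pdot \<subseteq> Dists" "Pdd ` I \<subseteq> Dists"
  shows "{Pdd i 0 | i. i \<in> I \<and> Pdd i 0 \<in> (\<lambda>P. P 0) ` Pdot} = (\<lambda>P. P 0) ` (Pdot \<inter> Pdd ` I)"
proof (intro equalityI subsetI)
  fix t assume "t \<in> {Pdd i 0 | i. i \<in> I \<and> Pdd i 0 \<in> (\<lambda>P. P 0) ` Pdot}"
  then obtain i P where "i \<in> I" "P \<in> Pdot" "t = Pdd i 0" "Pdd i 0 = P 0" by auto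
  moreover from this have "Pdd i = P" using Dists_eqI assms by blast
  ultimately show "t \<in> (\<lambda>P. P 0) ` (Pdot \<inter> Pdd ` I)" by blast
qed blast

lemma mem_if_point_mass_mem:
  assumes "S \<subseteq> Dists" "P \<in> Dists" "P 0 \<in> (\<lambda>P. P 0) ` S"
  shows "P \<in> S"
  using assms Dists_eqI by blast

theorem corollary6:
  fixes Pdot :: "(nat \<Rightarrow> real) set"
    and Pdd :: "nat \<Rightarrow> (nat \<Rightarrow> real)"
    and c :: nat
    and Plo Phi :: "nat \<Rightarrow> real"
  assumes "Pdot \<subseteq> Dists"
    and "\<forall>i\<in>{1..c}. Pdd i \<in> Dists"
    and "Plo \<in> Dists" and "Phi \<in> Dists"
    and "Plo 0 = Min {Pdd i 0 | i. i \<in> {1..c} \<and> Pdd i 0 \<in> (\<lambda>P. P 0) ` Pdot}"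
    and "Phi 0 = Max {Pdd i 0 | i. i \<in> {1..c} \<and> Pdd i 0 \<in> (\<lambda>P. P 0) ` Pdot}"
    and "\<exists>i\<in>{1..c}. Pdd i 0 \<in> (\<lambda>P. P 0) ` Pdot"
  shows "argsup_w Plo Phi \<noteq> {} \<and>
         (\<forall>w\<in>argsup_w Plo Phi. combination Pdot (Pdd ` {1..c}) = {mix w Plo Phi})"
proof -
  define S where "S = Pdot \<inter> Pdd ` {1..c}"
  have Pdd_Dists: "Pdd ` {1..c} \<subseteq> Dists" and S_Dists: "S \<subseteq> Dists"
    using assms(1,2) unfolding S_def by auto
  note masses = point_masses_eq_image[OF assms(1) Pdd_Dists, folded S_def]
  have finite: "finite ((\<lambda>P. P 0) ` S)" and "(\<lambda>P. P 0) ` S \<noteq> {}"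
    using assms(7) unfolding masses[symmetric] by auto
  then have "Plo \<in> S" "Phi \<in> S"
    using assms(3-6) S_Dists mem_if_point_mass_mem unfolding masses by auto
  have range: "Plo 0 \<le> P 0 \<and> P 0 \<le> Phi 0" if "P \<in> S" for P
    using that finite assms(5,6) unfolding masses by auto
  obtain w where argsup: "w \<in> argsup_w Plo Phi" "\<forall>v\<in>argsup_w Plo Phi. mix v Plo Phi = mix w Plo Phi"
    and max: "\<forall>P\<in>Dists. Plo 0 \<le> P 0 \<and> P 0 \<le> Phi 0 \<longrightarrow> KL P (mix w Plo Phi) \<le> KL Plo (mix w Plo Phi)"
    and unique: "\<forall>Q\<in>Dists. Q \<noteq> mix w Plo Phi \<longrightarrow>
           KL Plo (mix w Plo Phi) < KL Plo Q \<or> KL Plo (mix w Plo Phi) < KL Phi Q"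
    using binary_center_exists[OF assms(3,4)] range[OF \<open>Plo \<in> S\<close>] by blast
  have "w \<in> {0..1}" using argsup(1) unfolding argsup_w_def by blast
  then have "mix w Plo Phi \<in> Dists" using mix_in_Dists assms(3,4) by simp
  moreover have "\<forall>P\<in>S. KL P (mix w Plo Phi) \<le> KL Plo (mix w Plo Phi)"
    using max range S_Dists by (meson subsetD)
  moreover have "\<forall>Q\<in>Dists. Q \<noteq> mix w Plo Phi \<longrightarrow> (\<exists>P\<in>S. KL Plo (mix w Plo Phi) < KL P Q)"
    using unique \<open>Plo \<in> S\<close> \<open>Phi \<in> S\<close> by blast
  ultimately have "combination Pdot (Pdd ` {1..c}) = {mix w Plo Phi}"
    using combination_eq_singleton[OF assms(1) Pdd_Dists _ \<open>Plo \<in> S\<close>[unfolded S_def]]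
    unfolding S_def by blast
  then show ?thesis using argsup by (metis emptyE)
qed

end
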